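(* Let the sequences of integers $(a_k)_{k\ge 0}$, $(b_k)$, $(c_k)$, $(d_k)$, $(e_k)$, $(f_k)$, $(p_k)$, $(q_k)$, $(r_k)$, $(s_k)$, $(t_k)$ be defined as the coefficients of the following power series expansions about $x=0$: \begin{align*} &\frac{x^2+164 x+3}{x^3-99 x^2+99 x-1}=\sum_{k=0}^{\infty}a_k x^k, && \frac{-5 x^2+138 x+3}{x^3-99 x^2+99 x-1}=\sum_{k=0}^{\infty}p_k x^k,\\ &\frac{-7 x^2+134 x+1}{x^3-99 x^2+99 x-1}=\sum_{k=0}^{\infty}b_k x^k, && \frac{3 x^2+244 x+1}{x^3-99 x^2+99 x-1}=\sum_{k=0}^{\infty}q_k x^k,\\ &\frac{-x^2+298 x-1}{x^3-99 x^2+99 x-1}=\sum_{k=0}^{\infty}c_k x^k, && \frac{x^2+254 x-7}{x^3-99 x^2+99 x-1}=\sum_{k=0}^{\infty}r_k x^k,\\ &\frac{-5 x^2+228 x-7}{x^3-99 x^2+99 x-1}=\sum_{k=0}^{\infty}d_k x^k, && \frac{-7 x^2+148 x-5}{x^3-99 x^2+99 x-1}=\sum_{k=0}^{\infty}s_k x^k,\\ &\frac{3 x^2+258 x-5}{x^3-99 x^2+99 x-1}=\sum_{k=0}^{\infty}e_k x^k, && \frac{3}{1-x}=\sum_{k=0}^{\infty}t_k x^k,\\ &\frac{-3 x^2+94 x-3}{x^3-99 x^2+99 x-1}=\sum_{k=0}^{\infty}f_k x^k. \end{align*} Then for every integer $j$ with $1\le j\le 5$ and every integer $k\ge 0$,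 \[ a_k^j+b_k^j+c_k^j+d_k^j+e_k^j+f_k^j-p_k^j-q_k^j-r_k^j-s_k^j-t_k^j=1. \]
   Context: The sequences are the Taylor coefficients at $x=0$ of the given rational functions (all denominators are nonzero at $x=0$), equivalently formal power series identities. *)

theory Defs
  imports "HOL-Computational_Algebra.Formal_Power_Series"
begin

text \<open>Taylor coefficients at 0 of rational functions, taken as formal power series
  over the rationals (the denominator has nonzero constant term, so division is the
  genuine power-series inverse).\<close>

definition den :: "rat fps" where
  "den = fps_X ^ 3 - 99 * fps_X ^ 2 + 99 * fps_X - 1"

definition seq_a :: "nat \<Rightarrow> rat" where
  "seq_a k = fps_nth ((fps_X ^ 2 + 164 * fps_X + 3) / den) k"
definition seq_b :: "nat \<Rightarrow> rat" where
  "seq_b k = fps_nth ((- 7 * fps_X ^ 2 + 134 * fps_X + 1) / den) k"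
definition seq_c :: "nat \<Rightarrow> rat" where
  "seq_c k = fps_nth ((- (fps_X ^ 2) + 298 * fps_X - 1) / den) k"
definition seq_d :: "nat \<Rightarrow> rat" where
  "seq_d k = fps_nth ((- 5 * fps_X ^ 2 + 228 * fps_X - 7) / den) k"
definition seq_e :: "nat \<Rightarrow> rat" where
  "seq_e k = fps_nth ((3 * fps_X ^ 2 + 258 * fps_X - 5) / den) k"
definition seq_f :: "nat \<Rightarrow> rat" where
  "seq_f k = fps_nth ((- 3 * fps_X ^ 2 + 94 * fps_X - 3) / den) k"
definition seq_p :: "nat \<Rightarrow> rat" where
  "seq_p k = fps_nth ((- 5 * fps_X ^ 2 + 138 * fps_X + 3) / den) k"
definition seq_q :: "nat \<Rightarrow> rat" where
  "seq_q k = fps_nth ((3 * fps_X ^ 2 + 244 * fps_X + 1) / den) k"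
definition seq_r :: "nat \<Rightarrow> rat" where
  "seq_r k = fps_nth ((fps_X ^ 2 + 254 * fps_X - 7) / den) k"
definition seq_s :: "nat \<Rightarrow> rat" where
  "seq_s k = fps_nth ((- 7 * fps_X ^ 2 + 148 * fps_X - 5) / den) k"
definition seq_t :: "nat \<Rightarrow> rat" where
  "seq_t k = fps_nth (3 / (1 - fps_X)) k"

end

theory Submission
  imports Defs
begin

unbundle fps_syntax

text \<open>The denominator factors as \<open>(x - 1) (x\<^sup>2 - 98 x + 1)\<close>, and the roots
  \<open>49 \<plusminus> 20\<surd>6\<close> of the quadratic factor are reciprocal to each other. Hence by partial
  fractions every sequence except \<open>t\<close> has the form \<open>\<alpha> + \<beta> X\<^sub>k + \<gamma> Y\<^sub>k\<close>, where
  \<open>X\<^sub>k + Y\<^sub>k \<surd>6 = (49 + 20\<surd>6)\<^sup>k\<close>, so that \<open>X\<^sub>k\<^sup>2 - 6 Y\<^sub>k\<^sup>2 = 1\<close>. The alternating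
  power sum is then a polynomial in \<open>X\<^sub>k, Y\<^sub>k\<close> which is identically 1 for \<open>j \<le> 3\<close>
  and a multiple of the Pell form \<open>X\<^sup>2 - 6 Y\<^sup>2 - 1\<close> plus 1 for \<open>j = 4, 5\<close>.\<close>

lemma fps_numeral_mult_nth: "(numeral c * f :: 'a::comm_ring_1 fps) $ n = numeral c * f $ n"
  by (simp add: numeral_fps_const)

lemmas fps_X_polynomial_nth = fps_numeral_mult_nth fps_X_power_nth fps_X_nth fps_numeral_nth

fun pell_x :: "nat \<Rightarrow> rat" and pell_y :: "nat \<Rightarrow> rat" where
  "pell_x 0 = 1"
| "pell_y 0 = 0"
| "pell_x (Suc n) = 49 * pell_x n + 120 * pell_y n"
| "pell_y (Suc n) = 20 * pell_x n + 49 * pell_y n"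

lemma pell_equation: "pell_x n ^ 2 - 6 * pell_y n ^ 2 = 1"
  by (induction n) (simp_all add: power2_eq_square algebra_simps)

lemma pell_affine_recurrence:
  fixes \<alpha> \<beta> \<gamma> :: rat
  defines "g \<equiv> \<lambda>n. \<alpha> + \<beta> * pell_x n + \<gamma> * pell_y n"
  shows "g (n + 3) = 99 * g (n + 2) - 99 * g (n + 1) + g n"
  by (simp add: g_def numeral_eq_Suc algebra_simps)

lemma times_den_nth:
  "(f * den) $ n = (if 3 \<le> n then f $ (n - 3) else 0) - 99 * (if 2 \<le> n then f $ (n - 2) else 0)
     + 99 * (if 1 \<le> n then f $ (n - 1) else 0) - f $ n"
proof -
  have "f * den = fps_X ^ 3 * f - fps_const 99 * (fps_X ^ 2 * f) + fps_const 99 * (fps_X ^ 1 * f) - f"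
    by (simp add: den_def algebra_simps numeral_fps_const)
  then show ?thesis
    by (simp only: fps_sub_nth fps_add_nth fps_mult_left_const_nth fps_X_power_mult_nth) auto
qed

lemma den_nth_0: "den $ 0 = -1"
  by (simp add: den_def)

lemma divide_den_eq_Abs_fps:
  assumes "\<And>n. g (n + 3) = 99 * g (n + 2) - 99 * g (n + 1) + g n"
    and "N $ 0 = - g 0" "N $ 1 = 99 * g 0 - g 1" "N $ 2 = 99 * g 1 - 99 * g 0 - g 2"
    and "\<And>n. 3 \<le> n \<Longrightarrow> N $ n = 0"
  shows "N / den = Abs_fps g"
proof -
  have "Abs_fps g * den = N"
  proof (rule fps_ext)
    fix n :: nat
    consider "n = 0" | "n = 1" | "n = 2" | m where "n = m + 3"
    proof -
      have "n < 3 \<or> (\<exists>m. n = m + 3)" by presburger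
      then show ?thesis using that by (auto simp: eval_nat_numeral less_Suc_eq)
    qed
    then show "(Abs_fps g * den) $ n = N $ n"
      unfolding times_den_nth by cases (use assms in simp_all)
  qed
  moreover have "den \<noteq> 0"
    using den_nth_0 by auto
  ultimately show ?thesis
    using fps_divide_times_eq by blast
qed

lemma divide_den_nth_affine:
  assumes "N $ 0 = - (\<alpha> + \<beta>)"
    and "N $ 1 = 99 * (\<alpha> + \<beta>) - (\<alpha> + 49 * \<beta> + 20 * \<gamma>)"
    and "N $ 2 = 99 * (\<alpha> + 49 * \<beta> + 20 * \<gamma>) - 99 * (\<alpha> + \<beta>) - (\<alpha> + 4801 * \<beta> + 1960 * \<gamma>)"
    and "\<And>n. 3 \<le> n \<Longrightarrow> N $ n = 0"
  shows "(N / den) $ n = \<alpha> + \<beta> * pell_x n + \<gamma> * pell_y n"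
proof -
  have "N / den = Abs_fps (\<lambda>n. \<alpha> + \<beta> * pell_x n + \<gamma> * pell_y n)"
    by (rule divide_den_eq_Abs_fps[OF pell_affine_recurrence])
      (use assms in \<open>simp_all add: eval_nat_numeral\<close>)
  then show ?thesis
    by simp
qed

lemma seq_a_eq: "seq_a k = 7/4 + (-19/4) * pell_x k + (-23/2) * pell_y k"
  unfolding seq_a_def by (rule divide_den_nth_affine) (auto simp: fps_X_polynomial_nth)

lemma seq_b_eq: "seq_b k = 4/3 + (-7/3) * pell_x k + (-6) * pell_y k"
  unfolding seq_b_def by (rule divide_den_nth_affine) (auto simp: fps_X_polynomial_nth)

lemma seq_c_eq: "seq_c k = 37/12 + (-25/12) * pell_x k + (-5) * pell_y k"
  unfolding seq_c_def by (rule divide_den_nth_affine) (auto simp: fps_X_polynomial_nth)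

lemma seq_d_eq: "seq_d k = 9/4 + 19/4 * pell_x k + 23/2 * pell_y k"
  unfolding seq_d_def by (rule divide_den_nth_affine) (auto simp: fps_X_polynomial_nth)

lemma seq_e_eq: "seq_e k = 8/3 + 7/3 * pell_x k + 6 * pell_y k"
  unfolding seq_e_def by (rule divide_den_nth_affine) (auto simp: fps_X_polynomial_nth)

lemma seq_f_eq: "seq_f k = 11/12 + 25/12 * pell_x k + 5 * pell_y k"
  unfolding seq_f_def by (rule divide_den_nth_affine) (auto simp: fps_X_polynomial_nth)

lemma seq_p_eq: "seq_p k = 17/12 + (-53/12) * pell_x k + (-11) * pell_y k"
  unfolding seq_p_def by (rule divide_den_nth_affine) (auto simp: fps_X_polynomial_nth)

lemma seq_q_eq: "seq_q k = 31/12 + (-43/12) * pell_x k + (-17/2) * pell_y k"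
  unfolding seq_q_def by (rule divide_den_nth_affine) (auto simp: fps_X_polynomial_nth)

lemma seq_r_eq: "seq_r k = 31/12 + 53/12 * pell_x k + 11 * pell_y k"
  unfolding seq_r_def by (rule divide_den_nth_affine) (auto simp: fps_X_polynomial_nth)

lemma seq_s_eq: "seq_s k = 17/12 + 43/12 * pell_x k + 17/2 * pell_y k"
  unfolding seq_s_def by (rule divide_den_nth_affine) (auto simp: fps_X_polynomial_nth)

lemma seq_t_eq: "seq_t k = 3"
proof -
  have "3 / (1 - fps_X :: rat fps) = 3 * inverse (1 - fps_X)"
    by (simp add: fps_divide_unit)
  also have "inverse (1 - fps_X :: rat fps) = Abs_fps (\<lambda>_. 1)"
    by (rule fps_inverse_one_minus_fps_X)
  finally show ?thesis
    unfolding seq_t_def by (simp add: numeral_fps_const)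
qed

lemma pell_power_sum_identity:
  fixes X Y :: rat
  assumes pell: "X\<^sup>2 - 6 * Y\<^sup>2 = 1" and "1 \<le> j" "j \<le> 5"
  shows "(7/4 + (-19/4) * X + (-23/2) * Y) ^ j + (4/3 + (-7/3) * X + (-6) * Y) ^ j
    + (37/12 + (-25/12) * X + (-5) * Y) ^ j + (9/4 + 19/4 * X + 23/2 * Y) ^ j
    + (8/3 + 7/3 * X + 6 * Y) ^ j + (11/12 + 25/12 * X + 5 * Y) ^ j
    - (17/12 + (-53/12) * X + (-11) * Y) ^ j - (31/12 + (-43/12) * X + (-17/2) * Y) ^ j
    - (31/12 + 53/12 * X + 11 * Y) ^ j - (17/12 + 43/12 * X + 17/2 * Y) ^ j - 3 ^ j = 1"
proof -
  consider "j = 1" | "j = 2" | "j = 3" | "j = 4" | "j = 5"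
    using assms(2,3) by linarith
  then show ?thesis
  proof cases
    case 1 show ?thesis unfolding 1 by algebra
  next
    case 2 show ?thesis unfolding 2 by algebra
  next
    case 3 show ?thesis unfolding 3 by algebra
  next
    case 4 show ?thesis unfolding 4 using pell by algebra
  next
    case 5 show ?thesis unfolding 5 using pell by algebra
  qed
qed

theorem theorem2p1:
  fixes j k :: nat
  assumes "1 \<le> j" and "j \<le> 5"
  shows "seq_a k ^ j + seq_b k ^ j + seq_c k ^ j + seq_d k ^ j + seq_e k ^ j + seq_f k ^ j
         - seq_p k ^ j - seq_q k ^ j - seq_r k ^ j - seq_s k ^ j - seq_t k ^ j = 1"
  unfolding seq_a_eq seq_b_eq seq_c_eq seq_d_eq seq_e_eq seq_f_eq
    seq_p_eq seq_q_eq seq_r_eq seq_s_eq seq_t_eq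
  using pell_power_sum_identity[OF pell_equation assms] .

end
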